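(* Let $A:\mathbb{R}^d\rightrightarrows\mathbb{R}^d$ be maximally monotone and $B:\mathbb{R}^d\to\mathbb{R}^d$ be $L_B$-Lipschitz and $\mu$-strongly monotone with $\mu>0$, and suppose $z^\star\in(A+B)^{-1}(0)$ exists. Let $\widetilde B$ be a stochastic oracle with $\mathbb{E}[\widetilde B(x)]=B(x)$ and $\mathbb{E}\|\widetilde B(x)-B(x)\|^2\le\sigma^2$. Starting from $z_0\in\mathbb{R}^d$, consider for $t=0,\dots,T-1$, with $\tau_t=\frac{2}{(t+1)\mu+6L_B}$, $$z_{t+1/2}=J_{\tau_tA}(z_t-\tau_t\widetilde B(z_t)),\qquad z_{t+1}=z_{t+1/2}+\tau_t\widetilde B(z_t)-\tau_t\widetilde B(z_{t+1/2}),$$ where each evaluation of $\widetilde B$ uses an independent sample. Then $$\mathbb{E}\|z_T-z^\star\|^2\le\frac{\frac{6L_B}{\mu}\|z_0-z^\star\|^2+\frac{48\sigma^2}{\mu^2}}{T+\frac{6L_B}{\mu}}.$$ Each iteration uses two evaluations of $\widetilde B$ and one resolvent of $A$.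
   Context: For an operator $A$, $J_A=(\mathrm{Id}+A)^{-1}$. $B$ is $\mu$-strongly monotone if $\langle B(x)-B(y),x-y\rangle\ge\mu\|x-y\|^2$ for all $x,y$. *)

theory Defs
  imports "HOL-Analysis.Analysis" "HOL-Probability.Probability"
begin

definition monotone_op :: "('a::real_inner \<Rightarrow> 'a set) \<Rightarrow> bool" where
  "monotone_op A \<longleftrightarrow>
     (\<forall>x y u v. u \<in> A x \<longrightarrow> v \<in> A y \<longrightarrow> inner (u - v) (x - y) \<ge> 0)"

definition maximal_monotone :: "('a::real_inner \<Rightarrow> 'a set) \<Rightarrow> bool" where
  "maximal_monotone A \<longleftrightarrow> monotone_op A \<and>
     (\<forall>A'. monotone_op A' \<and> (\<forall>x. A x \<subseteq> A' x) \<longrightarrow> A' = A)"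

definition strongly_monotone :: "real \<Rightarrow> ('a::real_inner \<Rightarrow> 'a) \<Rightarrow> bool" where
  "strongly_monotone \<mu> B \<longleftrightarrow>
     (\<forall>x y. inner (B x - B y) (x - y) \<ge> \<mu> * (norm (x - y))\<^sup>2)"

definition scale_op :: "real \<Rightarrow> ('a::real_vector \<Rightarrow> 'a set) \<Rightarrow> 'a \<Rightarrow> 'a set" where
  "scale_op \<tau> A = (\<lambda>p. (\<lambda>v. \<tau> *\<^sub>R v) ` A p)"

text \<open>Resolvent \<open>J_A = (Id + A)^{-1}\<close> as a set-valued map:
  \<open>p \<in> J_A x \<longleftrightarrow> x \<in> p + A p\<close>.\<close>
definition resolvent :: "('a::real_vector \<Rightarrow> 'a set) \<Rightarrow> 'a \<Rightarrow> 'a set" where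
  "resolvent A x = {p. x - p \<in> A p}"

end

theory Submission
  imports Defs
begin

text \<open>
  Let E t be the mean squared distance of z t to the solution zs. Consider one
  forward-backward-forward step from z whose first forward evaluation uses an arbitrary vector g
  in place of B z, while the correction at the half step w uses B itself. Testing the monotonicity of A at w against the inclusion
  -B zs \<in> A zs, and using strong monotonicity and Lipschitz continuity of B, gives
  |z' - zs|^2 \<le> (1 - \<tau> \<mu>) |z - zs|^2 + 2 \<tau>^2 |g - B z|^2 whenever 2 \<tau> \<mu> + 2 \<tau>^2 L^2 \<le> 1.
  The half step only depends on the samples drawn before it, so the fresh sample used at w is
  independent of it; since the oracle is unbiased, replacing B w by the oracle value costs
  \<tau>^2 \<sigma>^2 in expectation (bias-variance decomposition), and the same independence argument
  bounds the expected error of g by \<sigma>^2. Hence E (t + 1) \<le> (1 - \<tau> t \<mu>) E t + 3 \<tau> t^2 \<sigma>^2,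
  and for \<tau> t \<mu> = 2 / (t + 1 + 6 L / \<mu>) induction on t yields E t \<le> C / (t + 6 L / \<mu>).
\<close>

section \<open>Resolvents and one forward-backward-forward step\<close>

lemma monotone_op_scale_op:
  assumes "monotone_op A" and "\<tau> \<ge> 0"
  shows "monotone_op (scale_op \<tau> A)"
  unfolding monotone_op_def scale_op_def
proof clarsimp
  fix x y u v assume "u \<in> A x" "v \<in> A y"
  then have "0 \<le> \<tau> * inner (u - v) (x - y)"
    using assms by (simp add: monotone_op_def)
  then show "0 \<le> inner (\<tau> *\<^sub>R u - \<tau> *\<^sub>R v) (x - y)"
    by (simp add: inner_diff_left right_diff_distrib)
qed

lemma resolvent_nonexpansive:
  assumes "monotone_op A" and p: "p \<in> resolvent A x" and q: "q \<in> resolvent A y"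
  shows "norm (p - q) \<le> norm (x - y)"
proof -
  have "inner ((x - p) - (y - q)) (p - q) \<ge> 0"
    using assms unfolding monotone_op_def resolvent_def by blast
  then have "(norm (p - q))\<^sup>2 \<le> inner (x - y) (p - q)"
    by (simp add: power2_norm_eq_inner inner_diff_left algebra_simps)
  also have "\<dots> \<le> norm (x - y) * norm (p - q)"
    by (rule norm_cauchy_schwarz)
  finally show ?thesis
    by (cases "p = q") (auto simp: power2_eq_square)
qed

lemma resolvent_unique:
  assumes "monotone_op A" "p \<in> resolvent A x" "q \<in> resolvent A x"
  shows "p = q"
  using resolvent_nonexpansive[OF assms] by simp

lemma borel_measurable_resolvent_selection:
  fixes A :: "'a::real_inner \<Rightarrow> 'a set"
  assumes mon: "monotone_op A" and u: "u \<in> borel_measurable N"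
    and f: "\<And>\<omega>. \<omega> \<in> space N \<Longrightarrow> f \<omega> \<in> resolvent A (u \<omega>)"
  shows "f \<in> borel_measurable N"
proof -
  define D where "D = {x. resolvent A x \<noteq> {}}"
  define J where "J x = (THE p. p \<in> resolvent A x)" for x
  have J_eq: "J x = p" if "p \<in> resolvent A x" for x p
    unfolding J_def using that resolvent_unique[OF mon] by blast
  have "1-lipschitz_on D J"
  proof (rule lipschitz_onI)
    fix x y assume "x \<in> D" "y \<in> D"
    then obtain p q where "p \<in> resolvent A x" "q \<in> resolvent A y"
      by (auto simp: D_def)
    then show "dist (J x) (J y) \<le> 1 * dist x y"
      using resolvent_nonexpansive[OF mon] by (simp add: J_eq dist_norm)
  qed simp
  then have "J \<in> borel_measurable (restrict_space borel D)"
    by (intro borel_measurable_continuous_on_restrict lipschitz_on_continuous_on)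
  moreover have "u \<in> measurable N (restrict_space borel D)"
    using u f by (intro measurable_restrict_space2) (auto simp: D_def)
  ultimately have "(\<lambda>\<omega>. J (u \<omega>)) \<in> borel_measurable N"
    by (rule measurable_compose[rotated])
  then show ?thesis
    by (rule measurable_cong[THEN iffD1, rotated]) (simp add: f J_eq)
qed

lemma power2_norm_add_le:
  fixes x y :: "'a::real_normed_vector"
  shows "(norm (x + y))\<^sup>2 \<le> 2 * (norm x)\<^sup>2 + 2 * (norm y)\<^sup>2"
proof -
  have "(norm (x + y))\<^sup>2 \<le> (norm x + norm y)\<^sup>2"
    by (simp add: norm_triangle_ineq power_mono)
  also have "\<dots> \<le> 2 * (norm x)\<^sup>2 + 2 * (norm y)\<^sup>2"
    using zero_le_power2[of "norm x - norm y"] unfolding power2_sum power2_diff by linarith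
  finally show ?thesis .
qed

lemma fbf_step_estimate:
  fixes A :: "'a::real_inner \<Rightarrow> 'a set"
  assumes mon: "monotone_op A" and lip: "L-lipschitz_on UNIV B"
    and strmon: "strongly_monotone \<mu> B" and "\<mu> \<ge> 0" and "\<tau> > 0"
    and zs: "- B zs \<in> A zs" and step_size: "2 * \<tau> * \<mu> + 2 * \<tau>\<^sup>2 * L\<^sup>2 \<le> 1"
    and w: "w \<in> resolvent (scale_op \<tau> A) (z - \<tau> *\<^sub>R g)"
  shows "(norm (w + \<tau> *\<^sub>R g - \<tau> *\<^sub>R B w - zs))\<^sup>2
           \<le> (1 - \<tau> * \<mu>) * (norm (z - zs))\<^sup>2 + 2 * \<tau>\<^sup>2 * (norm (g - B z))\<^sup>2"
proof -
  define zp where "zp = w + \<tau> *\<^sub>R g - \<tau> *\<^sub>R B w"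
  obtain a where a: "a \<in> A w" and z_eq: "z - \<tau> *\<^sub>R g - w = \<tau> *\<^sub>R a"
    using w by (auto simp: resolvent_def scale_op_def)
  have A_mono: "0 \<le> inner (a + B zs) (w - zs)"
    using mon a zs unfolding monotone_op_def by fastforce
  have B_mono: "\<mu> * (norm (w - zs))\<^sup>2 \<le> inner (B w - B zs) (w - zs)"
    using strmon by (simp add: strongly_monotone_def)
  have "z - zp = \<tau> *\<^sub>R (a + B zs) + \<tau> *\<^sub>R (B w - B zs)"
    using z_eq by (simp add: zp_def algebra_simps)
  then have descent: "\<tau> * \<mu> * (norm (w - zs))\<^sup>2 \<le> inner (z - zp) (w - zs)"
    using A_mono B_mono \<open>\<tau> > 0\<close> by (simp add: inner_add_left add_increasing)
  have three_point: "(norm (zp - zs))\<^sup>2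
      = (norm (z - zs))\<^sup>2 - 2 * inner (z - zp) (w - zs) - (norm (z - w))\<^sup>2 + (norm (zp - w))\<^sup>2"
    unfolding power2_norm_eq_inner by (simp add: inner_diff_left inner_diff_right inner_commute)
  have "norm (B z - B w) \<le> L * norm (z - w)"
    using lipschitz_onD[OF lip] by (simp add: dist_norm)
  then have "(norm (B z - B w))\<^sup>2 \<le> L\<^sup>2 * (norm (z - w))\<^sup>2"
    by (metis norm_ge_zero power_mono power_mult_distrib)
  then have "(norm (g - B w))\<^sup>2 \<le> 2 * (norm (g - B z))\<^sup>2 + 2 * (L\<^sup>2 * (norm (z - w))\<^sup>2)"
    using power2_norm_add_le[of "g - B z" "B z - B w"] by simp
  moreover have "zp - w = \<tau> *\<^sub>R (g - B w)"
    by (simp add: zp_def algebra_simps)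
  ultimately have correction: "(norm (zp - w))\<^sup>2
      \<le> \<tau>\<^sup>2 * (2 * (norm (g - B z))\<^sup>2 + 2 * (L\<^sup>2 * (norm (z - w))\<^sup>2))"
    by (simp add: power_mult_distrib mult_left_mono)
  have "\<tau> * \<mu> * (norm (z - zs))\<^sup>2 \<le> \<tau> * \<mu> * (2 * (norm (w - zs))\<^sup>2 + 2 * (norm (z - w))\<^sup>2)"
    using power2_norm_add_le[of "w - zs" "z - w"] \<open>\<tau> > 0\<close> \<open>\<mu> \<ge> 0\<close>
    by (intro mult_left_mono) auto
  moreover have "(2 * \<tau> * \<mu> + 2 * \<tau>\<^sup>2 * L\<^sup>2) * (norm (z - w))\<^sup>2 \<le> (norm (z - w))\<^sup>2"
    using mult_right_mono[OF step_size, of "(norm (z - w))\<^sup>2"] by simp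
  ultimately show ?thesis
    using three_point descent correction unfolding zp_def[symmetric]
    by (simp add: algebra_simps)
qed

lemma strongly_monotone_le_lipschitz:
  fixes B :: "'a::euclidean_space \<Rightarrow> 'a"
  assumes "strongly_monotone \<mu> B" and "L-lipschitz_on UNIV B"
  shows "\<mu> \<le> L"
proof -
  obtain e :: 'a where "e \<in> Basis"
    using nonempty_Basis by blast
  then have e: "norm e = 1"
    by (rule norm_Basis)
  have "\<mu> * (norm (e - 0))\<^sup>2 \<le> inner (B e - B 0) (e - 0)"
    using assms(1) unfolding strongly_monotone_def by blast
  also have "\<dots> \<le> norm (B e - B 0) * norm (e - 0)"
    by (rule norm_cauchy_schwarz)
  also have "\<dots> \<le> L * norm (e - 0) * norm (e - 0)"
    using lipschitz_onD[OF assms(2), of e 0] by (intro mult_right_mono) (auto simp: dist_norm)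
  finally show ?thesis
    using e by simp
qed

lemma fbf_step_size_small:
  fixes \<mu> L x :: real
  assumes "0 < \<mu>" "\<mu> \<le> L" "\<mu> \<le> x"
  shows "2 * (2 / (x + 6 * L)) * \<mu> + 2 * (2 / (x + 6 * L))\<^sup>2 * L\<^sup>2 \<le> 1"
proof -
  define d where "d = x + 6 * L"
  have "0 < d" "7 * \<mu> \<le> d" "6 * L \<le> d"
    using assms by (auto simp: d_def)
  then have "2 / d * \<mu> \<le> 2 / 7" "2 / d * L \<le> 1 / 3"
    by (auto simp: field_simps)
  moreover have "0 \<le> 2 / d * L"
    using \<open>0 < d\<close> assms by simp
  ultimately have "(2 / d * L)\<^sup>2 \<le> (1 / 3)\<^sup>2"
    by (intro power_mono) auto
  also have "\<dots> = 1 / 9"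
    by (simp add: power2_eq_square)
  finally have "(2 / d * L)\<^sup>2 \<le> 1 / 9" .
  moreover have "2 * (2 / d) * \<mu> + 2 * (2 / d)\<^sup>2 * L\<^sup>2 = 2 * (2 / d * \<mu>) + 2 * (2 / d * L)\<^sup>2"
    by (simp add: power_divide power_mult_distrib)
  ultimately show ?thesis
    using \<open>2 / d * \<mu> \<le> 2 / 7\<close> unfolding d_def[symmetric] by linarith
qed

section \<open>The rate recursion\<close>

lemma rate_recursion_step:
  fixes b K C :: real
  assumes "1 \<le> b" "0 \<le> K" "12 * K \<le> C"
  shows "(1 - 2 / (b + 1)) * (C / b) + 12 * K / (b + 1)\<^sup>2 \<le> C / (b + 1)"
proof -
  have b: "0 < b" "b + 1 \<noteq> 0"
    using assms by auto
  have "(1 - 2 / (b + 1)) * (C / b) = C * (b - 1) / (b * (b + 1))"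
    using b by (simp add: field_simps)
  also have "\<dots> = C / (b + 1) - C / (b * (b + 1))"
    using b by (simp add: diff_divide_distrib right_diff_distrib)
  finally have first: "(1 - 2 / (b + 1)) * (C / b) = C / (b + 1) - C / (b * (b + 1))" .
  have "12 * K * b \<le> C * b"
    using assms by (intro mult_right_mono) auto
  also have "\<dots> \<le> C * (b + 1)"
    using assms by (intro mult_left_mono) auto
  finally have "12 * K * b / (b * (b + 1)) \<le> C * (b + 1) / (b * (b + 1))"
    using b by (intro divide_right_mono) auto
  then have "12 * K / (b + 1) \<le> C / b"
    using b by simp
  then have "12 * K / (b + 1) / (b + 1) \<le> C / b / (b + 1)"
    using b by (intro divide_right_mono) auto
  then have "12 * K / (b + 1)\<^sup>2 \<le> C / (b * (b + 1))"
    by (simp add: power2_eq_square)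
  with first show ?thesis
    by simp
qed

lemma ennreal_recursion_rate:
  fixes e :: "nat \<Rightarrow> ennreal" and a K C :: real
  assumes "1 \<le> a" "0 \<le> K" "12 * K \<le> C"
    and init: "e 0 \<le> ennreal (C / a)"
    and step: "\<And>t. t < T \<Longrightarrow>
      e (Suc t) \<le> ennreal (1 - 2 / (real t + a + 1)) * e t + ennreal (12 * K / (real t + a + 1)\<^sup>2)"
  shows "e T \<le> ennreal (C / (real T + a))"
proof -
  have "e t \<le> ennreal (C / (real t + a))" if "t \<le> T" for t
    using that
  proof (induction t)
    case 0
    then show ?case
      using init by simp
  next
    case (Suc t)
    define b where "b = real t + a"
    have "1 \<le> b" "0 \<le> C"
      using assms by (auto simp: b_def)
    then have nonneg: "0 \<le> 1 - 2 / (b + 1)" "0 \<le> C / b" "0 \<le> 12 * K / (b + 1)\<^sup>2"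
      using \<open>0 \<le> K\<close> by (auto simp: field_simps)
    have "e (Suc t) \<le> ennreal (1 - 2 / (b + 1)) * e t + ennreal (12 * K / (b + 1)\<^sup>2)"
      using step[of t] Suc.prems by (simp add: b_def)
    also have "\<dots> \<le> ennreal (1 - 2 / (b + 1)) * ennreal (C / b) + ennreal (12 * K / (b + 1)\<^sup>2)"
      using Suc by (intro add_right_mono mult_left_mono) (simp_all add: b_def)
    also have "\<dots> = ennreal ((1 - 2 / (b + 1)) * (C / b) + 12 * K / (b + 1)\<^sup>2)"
      unfolding ennreal_mult[symmetric, OF nonneg(1,2)]
      by (rule ennreal_plus[symmetric, OF mult_nonneg_nonneg[OF nonneg(1,2)] nonneg(3)])
    also have "\<dots> \<le> ennreal (C / (b + 1))"
      using rate_recursion_step[OF \<open>1 \<le> b\<close> assms(2,3)] by (rule ennreal_leI)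
    finally show ?case
      by (simp add: b_def add_ac)
  qed
  then show ?thesis
    by simp
qed

section \<open>Independent samples and unbiased oracles\<close>

lemma integrable_integral_le_of_nn_integral_le:
  fixes f :: "'a \<Rightarrow> real"
  assumes f: "f \<in> borel_measurable M" and nonneg: "\<And>x. 0 \<le> f x"
    and le: "(\<integral>\<^sup>+x. ennreal (f x) \<partial>M) \<le> ennreal v" and "0 \<le> v"
  shows "integrable M f \<and> integral\<^sup>L M f \<le> v"
proof
  show int: "integrable M f"
    using f le nonneg by (simp add: integrable_iff_bounded le_less_trans)
  have "ennreal (integral\<^sup>L M f) = (\<integral>\<^sup>+x. ennreal (f x) \<partial>M)"
    using int nonneg by (intro nn_integral_eq_integral[symmetric]) auto
  with le have "ennreal (integral\<^sup>L M f) \<le> ennreal v"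
    by simp
  with \<open>0 \<le> v\<close> show "integral\<^sup>L M f \<le> v"
    by (simp add: ennreal_le_iff)
qed

context prob_space
begin

lemma nn_integral_indep_set:
  assumes X: "X \<in> measurable M P" and Y: "Y \<in> measurable M S"
    and indep: "indep_set {X -` A \<inter> space M | A. A \<in> sets P} {Y -` A \<inter> space M | A. A \<in> sets S}"
    and h: "h \<in> borel_measurable (P \<Otimes>\<^sub>M S)"
  shows "(\<integral>\<^sup>+\<omega>. h (X \<omega>, Y \<omega>) \<partial>M) = (\<integral>\<^sup>+\<omega>. \<integral>\<^sup>+\<omega>'. h (X \<omega>, Y \<omega>') \<partial>M \<partial>M)"
proof -
  interpret X: prob_space "distr M P X"
    by (rule prob_space_distr[OF X])
  interpret Y: prob_space "distr M S Y"
    by (rule prob_space_distr[OF Y])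
  interpret XY: pair_prob_space "distr M P X" "distr M S Y" ..
  have XY: "(\<lambda>\<omega>. (X \<omega>, Y \<omega>)) \<in> measurable M (P \<Otimes>\<^sub>M S)"
    using X Y by (rule measurable_Pair)
  have joint: "distr M P X \<Otimes>\<^sub>M distr M S Y = distr M (P \<Otimes>\<^sub>M S) (\<lambda>\<omega>. (X \<omega>, Y \<omega>))"
  proof (rule pair_measure_eqI)
    fix A B assume A: "A \<in> sets (distr M P X)" and B: "B \<in> sets (distr M S Y)"
    have "(\<lambda>\<omega>. (X \<omega>, Y \<omega>)) -` (A \<times> B) \<inter> space M = (X -` A \<inter> space M) \<inter> (Y -` B \<inter> space M)"
      by auto
    moreover have "prob ((X -` A \<inter> space M) \<inter> (Y -` B \<inter> space M))
        = prob (X -` A \<inter> space M) * prob (Y -` B \<inter> space M)"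
      using A B by (intro indep_setD[OF indep]) auto
    ultimately show "emeasure (distr M P X) A * emeasure (distr M S Y) B
        = emeasure (distr M (P \<Otimes>\<^sub>M S) (\<lambda>\<omega>. (X \<omega>, Y \<omega>))) (A \<times> B)"
      using A B X Y XY by (simp add: emeasure_distr emeasure_eq_measure ennreal_mult)
  qed (simp_all add: X.sigma_finite_measure_axioms Y.sigma_finite_measure_axioms)
  have h': "h \<in> borel_measurable (distr M P X \<Otimes>\<^sub>M distr M S Y)"
    using h by (simp cong: measurable_cong_sets)
  have "(\<integral>\<^sup>+\<omega>. h (X \<omega>, Y \<omega>) \<partial>M) = (\<integral>\<^sup>+p. h p \<partial>(distr M P X \<Otimes>\<^sub>M distr M S Y))"
    unfolding joint using XY h by (simp add: nn_integral_distr)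
  also have "\<dots> = (\<integral>\<^sup>+x. \<integral>\<^sup>+s. h (x, s) \<partial>distr M S Y \<partial>distr M P X)"
    by (rule Y.nn_integral_fst[OF h', symmetric])
  also have "\<dots> = (\<integral>\<^sup>+\<omega>. \<integral>\<^sup>+s. h (X \<omega>, s) \<partial>distr M S Y \<partial>M)"
    using X Y.borel_measurable_nn_integral_fst[OF h'] by (simp add: nn_integral_distr)
  also have "\<dots> = (\<integral>\<^sup>+\<omega>. \<integral>\<^sup>+\<omega>'. h (X \<omega>, Y \<omega>') \<partial>M \<partial>M)"
    using X Y h by (intro nn_integral_cong) (simp add: nn_integral_distr measurable_space)
  finally show ?thesis .
qed

lemma nn_integral_power2_norm_diff_scaleR_le:
  fixes Y :: "'a \<Rightarrow> 'b::euclidean_space"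
  assumes int: "integrable M Y" and mean: "(\<integral>\<omega>. Y \<omega> \<partial>M) = m"
    and var: "(\<integral>\<^sup>+\<omega>. ennreal ((norm (Y \<omega> - m))\<^sup>2) \<partial>M) \<le> ennreal v" and "0 \<le> v"
  shows "(\<integral>\<^sup>+\<omega>. ennreal ((norm (c - \<tau> *\<^sub>R Y \<omega>))\<^sup>2) \<partial>M) \<le> ennreal ((norm (c - \<tau> *\<^sub>R m))\<^sup>2 + \<tau>\<^sup>2 * v)"
proof -
  define f where "f \<omega> = (norm (Y \<omega> - m))\<^sup>2" for \<omega>
  define d where "d = c - \<tau> *\<^sub>R m"
  have "f \<in> borel_measurable M"
    using int unfolding f_def by measurable
  then have f: "integrable M f" and f_le: "integral\<^sup>L M f \<le> v"
    using integrable_integral_le_of_nn_integral_le[of f M v] var \<open>0 \<le> v\<close> by (simp_all add: f_def)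
  have expand: "(norm (c - \<tau> *\<^sub>R Y \<omega>))\<^sup>2 = (norm d)\<^sup>2 - 2 * \<tau> * inner d (Y \<omega> - m) + \<tau>\<^sup>2 * f \<omega>" for \<omega>
  proof -
    have "c - \<tau> *\<^sub>R Y \<omega> = d - \<tau> *\<^sub>R (Y \<omega> - m)"
      by (simp add: d_def algebra_simps)
    then show ?thesis
      unfolding f_def power2_norm_eq_inner
      by (simp add: inner_diff_left inner_diff_right inner_commute power2_eq_square algebra_simps)
  qed
  have centred: "integrable M (\<lambda>\<omega>. Y \<omega> - m)" "(\<integral>\<omega>. Y \<omega> - m \<partial>M) = 0"
    using int mean by (simp_all add: prob_space)
  then have "integrable M (\<lambda>\<omega>. (norm d)\<^sup>2 - 2 * \<tau> * inner d (Y \<omega> - m) + \<tau>\<^sup>2 * f \<omega>)"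
    using f by auto
  then have "(\<integral>\<^sup>+\<omega>. ennreal ((norm (c - \<tau> *\<^sub>R Y \<omega>))\<^sup>2) \<partial>M)
      = ennreal (\<integral>\<omega>. (norm d)\<^sup>2 - 2 * \<tau> * inner d (Y \<omega> - m) + \<tau>\<^sup>2 * f \<omega> \<partial>M)"
    unfolding expand by (rule nn_integral_eq_integral) (simp add: expand[symmetric])
  also have "\<dots> = ennreal ((norm d)\<^sup>2 + \<tau>\<^sup>2 * integral\<^sup>L M f)"
    using centred f by (simp add: prob_space)
  also have "\<dots> \<le> ennreal ((norm d)\<^sup>2 + \<tau>\<^sup>2 * v)"
    using f_le by (intro ennreal_leI add_left_mono mult_left_mono) auto
  finally show ?thesis
    by (simp add: d_def)
qed

lemma nn_integral_affine_combination:
  assumes "f \<in> borel_measurable M" "g \<in> borel_measurable M"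
    and "\<And>\<omega>. 0 \<le> f \<omega>" "\<And>\<omega>. 0 \<le> g \<omega>" "0 \<le> a" "0 \<le> b" "0 \<le> c"
  shows "(\<integral>\<^sup>+\<omega>. ennreal (a * f \<omega> + b * g \<omega> + c) \<partial>M)
           = ennreal a * (\<integral>\<^sup>+\<omega>. ennreal (f \<omega>) \<partial>M)
             + ennreal b * (\<integral>\<^sup>+\<omega>. ennreal (g \<omega>) \<partial>M) + ennreal c"
proof -
  have "(\<integral>\<^sup>+\<omega>. ennreal (a * f \<omega> + b * g \<omega> + c) \<partial>M)
      = (\<integral>\<^sup>+\<omega>. ennreal a * ennreal (f \<omega>) + ennreal b * ennreal (g \<omega>) + ennreal c \<partial>M)"
    using assms by (intro nn_integral_cong) (simp add: ennreal_plus ennreal_mult)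
  also have "\<dots> = ennreal a * (\<integral>\<^sup>+\<omega>. ennreal (f \<omega>) \<partial>M)
      + ennreal b * (\<integral>\<^sup>+\<omega>. ennreal (g \<omega>) \<partial>M) + ennreal c"
    using assms by (simp add: nn_integral_add nn_integral_cmult emeasure_space_1)
  finally show ?thesis .
qed

end

locale indep_samples = prob_space M for M :: "'w measure" +
  fixes S :: "'s measure" and \<xi> :: "nat \<Rightarrow> 'w \<Rightarrow> 's"
  assumes indep_samples: "indep_vars (\<lambda>_. S) \<xi> UNIV"
begin

definition past :: "nat \<Rightarrow> 'w measure" where
  "past n = vimage_algebra (space M) (\<lambda>\<omega>. \<lambda>i\<in>{..<n}. \<xi> i \<omega>) (\<Pi>\<^sub>M i\<in>{..<n}. S)"

lemma measurable_sample: "\<xi> i \<in> measurable M S"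
  using indep_samples by (simp add: indep_vars_def2)

lemma space_past [simp]: "space (past n) = space M"
  by (simp add: past_def)

lemma measurable_samples: "(\<lambda>\<omega>. \<lambda>i\<in>{..<n}. \<xi> i \<omega>) \<in> measurable M (\<Pi>\<^sub>M i\<in>{..<n}. S)"
  by (intro measurable_restrict measurable_sample)

lemma measurable_past_samples: "(\<lambda>\<omega>. \<lambda>i\<in>{..<n}. \<xi> i \<omega>) \<in> measurable (past n) (\<Pi>\<^sub>M i\<in>{..<n}. S)"
  unfolding past_def
  by (rule measurable_vimage_algebra1) (use measurable_space[OF measurable_samples] in blast)

lemma measurable_past_sample:
  assumes "i < n"
  shows "\<xi> i \<in> measurable (past n) S"
  using measurable_compose[OF measurable_past_samples measurable_component_singleton, of i n] assms
  by simp

lemma subalgebra_past: "subalgebra M (past n)"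
  using sets_image_in_sets[OF refl measurable_samples] by (simp add: subalgebra_def past_def)

lemma measurable_past_mono:
  assumes f: "f \<in> measurable (past n) K" and "n \<le> m"
  shows "f \<in> measurable (past m) K"
proof -
  have "(\<lambda>\<omega>. \<lambda>i\<in>{..<n}. \<xi> i \<omega>) \<in> measurable (past m) (\<Pi>\<^sub>M i\<in>{..<n}. S)"
    using \<open>n \<le> m\<close> by (intro measurable_restrict measurable_past_sample) auto
  then have "subalgebra (past m) (past n)"
    using sets_image_in_sets[OF space_past] by (simp add: subalgebra_def past_def[of n])
  then show ?thesis
    using f by (rule measurable_from_subalg)
qed

lemma indep_set_past_sample:
  assumes X: "X \<in> measurable (past n) P" and "n \<le> j"
  shows "indep_set {X -` A \<inter> space M | A. A \<in> sets P} {\<xi> j -` A \<inter> space M | A. A \<in> sets S}"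
proof -
  have "indep_var (\<Pi>\<^sub>M i\<in>{..<n}. S) (\<lambda>\<omega>. \<lambda>i\<in>{..<n}. \<xi> i \<omega>) (\<Pi>\<^sub>M i\<in>{j}. S) (\<lambda>\<omega>. \<lambda>i\<in>{j}. \<xi> i \<omega>)"
    using \<open>n \<le> j\<close> by (intro indep_var_restrict[OF indep_samples]) auto
  then have indep: "indep_set (sets (past n))
      (sigma_sets (space M) {(\<lambda>\<omega>. \<lambda>i\<in>{j}. \<xi> i \<omega>) -` A \<inter> space M | A. A \<in> sets (\<Pi>\<^sub>M i\<in>{j}. S)})"
    by (simp add: indep_var_eq past_def sets_vimage_algebra)
  have "{X -` A \<inter> space M | A. A \<in> sets P} \<subseteq> sets (past n)"
    using measurable_sets[OF X] by auto
  moreover have "{\<xi> j -` A \<inter> space M | A. A \<in> sets S}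
      \<subseteq> sigma_sets (space M) {(\<lambda>\<omega>. \<lambda>i\<in>{j}. \<xi> i \<omega>) -` A \<inter> space M | A. A \<in> sets (\<Pi>\<^sub>M i\<in>{j}. S)}"
  proof safe
    fix A assume "A \<in> sets S"
    then have "(\<lambda>f. f j) -` A \<inter> space (\<Pi>\<^sub>M i\<in>{j}. S) \<in> sets (\<Pi>\<^sub>M i\<in>{j}. S)"
      by (intro measurable_sets[OF measurable_component_singleton]) auto
    moreover have "\<xi> j -` A \<inter> space M
        = (\<lambda>\<omega>. \<lambda>i\<in>{j}. \<xi> i \<omega>) -` ((\<lambda>f. f j) -` A \<inter> space (\<Pi>\<^sub>M i\<in>{j}. S)) \<inter> space M"
      using measurable_space[OF measurable_sample[of j]] by (auto simp: space_PiM)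
    ultimately show "\<xi> j -` A \<inter> space M
        \<in> sigma_sets (space M) {(\<lambda>\<omega>. \<lambda>i\<in>{j}. \<xi> i \<omega>) -` A \<inter> space M | A. A \<in> sets (\<Pi>\<^sub>M i\<in>{j}. S)}"
      by blast
  qed
  ultimately show ?thesis
    using indep_sets_mono_sets[OF indep[unfolded indep_set_def]]
    unfolding indep_set_def by (auto split: bool.split)
qed

lemma nn_integral_past_sample:
  assumes "X \<in> measurable (past n) P" "n \<le> j" "h \<in> borel_measurable (P \<Otimes>\<^sub>M S)"
  shows "(\<integral>\<^sup>+\<omega>. h (X \<omega>, \<xi> j \<omega>) \<partial>M) = (\<integral>\<^sup>+\<omega>. \<integral>\<^sup>+\<omega>'. h (X \<omega>, \<xi> j \<omega>') \<partial>M \<partial>M)"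
  using measurable_from_subalg[OF subalgebra_past assms(1)] measurable_sample
    indep_set_past_sample[OF assms(1,2)] assms(3)
  by (rule nn_integral_indep_set)

end

locale unbiased_oracle = indep_samples M S \<xi>
  for M :: "'w measure" and S :: "'s measure" and \<xi> :: "nat \<Rightarrow> 'w \<Rightarrow> 's" +
  fixes Bt :: "'v::euclidean_space \<Rightarrow> 's \<Rightarrow> 'v" and B :: "'v \<Rightarrow> 'v" and \<sigma> :: real
  assumes oracle_measurable: "(\<lambda>(x, s). Bt x s) \<in> borel_measurable (borel \<Otimes>\<^sub>M S)"
    and oracle_unbiased: "\<And>i x. integrable M (\<lambda>\<omega>. Bt x (\<xi> i \<omega>)) \<and> (\<integral>\<omega>. Bt x (\<xi> i \<omega>) \<partial>M) = B x"
    and oracle_variance: "\<And>i x. (\<integral>\<^sup>+\<omega>. ennreal ((norm (Bt x (\<xi> i \<omega>) - B x))\<^sup>2) \<partial>M) \<le> ennreal (\<sigma>\<^sup>2)"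
begin

lemma measurable_oracle [measurable]:
  assumes "f \<in> borel_measurable N" "g \<in> measurable N S"
  shows "(\<lambda>x. Bt (f x) (g x)) \<in> borel_measurable N"
  using measurable_compose[OF measurable_Pair[OF assms] oracle_measurable] by simp

lemma nn_integral_oracle_step_le:
  assumes X: "X \<in> borel_measurable (past n)" and c: "c \<in> borel_measurable (past n)" and "n \<le> j"
  shows "(\<integral>\<^sup>+\<omega>. ennreal ((norm (c \<omega> - \<tau> *\<^sub>R Bt (X \<omega>) (\<xi> j \<omega>)))\<^sup>2) \<partial>M)
           \<le> (\<integral>\<^sup>+\<omega>. ennreal ((norm (c \<omega> - \<tau> *\<^sub>R B (X \<omega>)))\<^sup>2 + \<tau>\<^sup>2 * \<sigma>\<^sup>2) \<partial>M)"
proof -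
  define h where "h p = ennreal ((norm (snd (fst p) - \<tau> *\<^sub>R Bt (fst (fst p)) (snd p)))\<^sup>2)"
    for p :: "('v \<times> 'v) \<times> 's"
  have "h \<in> borel_measurable ((borel \<Otimes>\<^sub>M borel) \<Otimes>\<^sub>M S)"
    unfolding h_def by measurable
  moreover have "(\<lambda>\<omega>. (X \<omega>, c \<omega>)) \<in> measurable (past n) (borel \<Otimes>\<^sub>M borel)"
    using X c by (rule measurable_Pair)
  ultimately have "(\<integral>\<^sup>+\<omega>. h ((X \<omega>, c \<omega>), \<xi> j \<omega>) \<partial>M) = (\<integral>\<^sup>+\<omega>. \<integral>\<^sup>+\<omega>'. h ((X \<omega>, c \<omega>), \<xi> j \<omega>') \<partial>M \<partial>M)"
    using \<open>n \<le> j\<close> by (intro nn_integral_past_sample)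
  also have "\<dots> \<le> (\<integral>\<^sup>+\<omega>. ennreal ((norm (c \<omega> - \<tau> *\<^sub>R B (X \<omega>)))\<^sup>2 + \<tau>\<^sup>2 * \<sigma>\<^sup>2) \<partial>M)"
  proof (rule nn_integral_mono)
    fix \<omega>
    show "(\<integral>\<^sup>+\<omega>'. h ((X \<omega>, c \<omega>), \<xi> j \<omega>') \<partial>M) \<le> ennreal ((norm (c \<omega> - \<tau> *\<^sub>R B (X \<omega>)))\<^sup>2 + \<tau>\<^sup>2 * \<sigma>\<^sup>2)"
      unfolding h_def fst_conv snd_conv
      by (rule nn_integral_power2_norm_diff_scaleR_le) (use oracle_unbiased oracle_variance in auto)
  qed
  finally show ?thesis
    by (simp add: h_def)
qed

lemma nn_integral_oracle_error_le:
  assumes "B \<in> borel_measurable borel" "X \<in> borel_measurable (past n)" "n \<le> j"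
  shows "(\<integral>\<^sup>+\<omega>. ennreal ((norm (Bt (X \<omega>) (\<xi> j \<omega>) - B (X \<omega>)))\<^sup>2) \<partial>M) \<le> ennreal (\<sigma>\<^sup>2)"
proof -
  have "(\<integral>\<^sup>+\<omega>. ennreal ((norm (B (X \<omega>) - 1 *\<^sub>R Bt (X \<omega>) (\<xi> j \<omega>)))\<^sup>2) \<partial>M)
      \<le> (\<integral>\<^sup>+\<omega>. ennreal ((norm (B (X \<omega>) - 1 *\<^sub>R B (X \<omega>)))\<^sup>2 + 1\<^sup>2 * \<sigma>\<^sup>2) \<partial>M)"
    using measurable_compose[OF assms(2,1)] assms(2,3) by (intro nn_integral_oracle_step_le)
  then show ?thesis
    by (simp add: norm_minus_commute emeasure_space_1)
qed

end

section \<open>The stochastic iteration\<close>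

locale stochastic_fbf = unbiased_oracle M S \<xi> Bt B \<sigma>
  for M :: "'w measure" and S :: "'s measure" and \<xi> :: "nat \<Rightarrow> 'w \<Rightarrow> 's"
    and Bt :: "'v::euclidean_space \<Rightarrow> 's \<Rightarrow> 'v" and B \<sigma> +
  fixes A :: "'v \<Rightarrow> 'v set" and L \<mu> :: real and zs z0 :: 'v and \<tau> :: "nat \<Rightarrow> real"
    and z zh :: "nat \<Rightarrow> 'w \<Rightarrow> 'v" and T :: nat
  assumes A_monotone: "monotone_op A"
    and B_lipschitz: "L-lipschitz_on UNIV B"
    and B_strongly_monotone: "strongly_monotone \<mu> B" and mu_nonneg: "0 \<le> \<mu>"
    and zs_zero: "- B zs \<in> A zs"
    and step_pos: "\<And>t. 0 < \<tau> t"
    and step_small: "\<And>t. 2 * \<tau> t * \<mu> + 2 * (\<tau> t)\<^sup>2 * L\<^sup>2 \<le> 1"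
    and init: "\<And>\<omega>. \<omega> \<in> space M \<Longrightarrow> z 0 \<omega> = z0"
    and half_step: "\<And>t \<omega>. t < T \<Longrightarrow> \<omega> \<in> space M \<Longrightarrow>
           zh t \<omega> \<in> resolvent (scale_op (\<tau> t) A) (z t \<omega> - \<tau> t *\<^sub>R Bt (z t \<omega>) (\<xi> (2 * t) \<omega>))"
    and full_step: "\<And>t \<omega>. t < T \<Longrightarrow> \<omega> \<in> space M \<Longrightarrow>
           z (Suc t) \<omega> = zh t \<omega> + \<tau> t *\<^sub>R Bt (z t \<omega>) (\<xi> (2 * t) \<omega>)
                                  - \<tau> t *\<^sub>R Bt (zh t \<omega>) (\<xi> (2 * t + 1) \<omega>)"
begin

lemma B_measurable: "B \<in> borel_measurable borel"
  using B_lipschitz by (intro borel_measurable_continuous_onI lipschitz_on_continuous_on)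

lemma measurable_half_step:
  assumes "t < T" and z: "z t \<in> borel_measurable (past (2 * t))"
  shows "zh t \<in> borel_measurable (past (2 * t + 1))"
proof (rule borel_measurable_resolvent_selection)
  show "monotone_op (scale_op (\<tau> t) A)"
    using A_monotone step_pos by (simp add: monotone_op_scale_op less_imp_le)
  have "z t \<in> borel_measurable (past (2 * t + 1))"
    using z by (rule measurable_past_mono) simp
  moreover from this have "(\<lambda>\<omega>. Bt (z t \<omega>) (\<xi> (2 * t) \<omega>)) \<in> borel_measurable (past (2 * t + 1))"
    by (rule measurable_oracle) (simp add: measurable_past_sample)
  ultimately show "(\<lambda>\<omega>. z t \<omega> - \<tau> t *\<^sub>R Bt (z t \<omega>) (\<xi> (2 * t) \<omega>))
      \<in> borel_measurable (past (2 * t + 1))"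
    by (intro borel_measurable_diff borel_measurable_scaleR borel_measurable_const)
qed (use half_step \<open>t < T\<close> in simp)

lemma measurable_iterate: "t \<le> T \<Longrightarrow> z t \<in> borel_measurable (past (2 * t))"
proof (induction t)
  case 0
  show ?case
    by (subst measurable_cong[where g="\<lambda>_. z0"]) (simp_all add: init)
next
  case (Suc t)
  then have "t < T" and z: "z t \<in> borel_measurable (past (2 * t))"
    by simp_all
  have zh: "zh t \<in> borel_measurable (past (2 * Suc t))"
    using measurable_half_step[OF \<open>t < T\<close> z] by (rule measurable_past_mono) simp
  moreover have "z t \<in> borel_measurable (past (2 * Suc t))"
    using z by (rule measurable_past_mono) simp
  ultimately have "(\<lambda>\<omega>. Bt (z t \<omega>) (\<xi> (2 * t) \<omega>)) \<in> borel_measurable (past (2 * Suc t))"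
    "(\<lambda>\<omega>. Bt (zh t \<omega>) (\<xi> (2 * t + 1) \<omega>)) \<in> borel_measurable (past (2 * Suc t))"
    by (simp_all add: measurable_oracle measurable_past_sample)
  with zh have "(\<lambda>\<omega>. zh t \<omega> + \<tau> t *\<^sub>R Bt (z t \<omega>) (\<xi> (2 * t) \<omega>)
                        - \<tau> t *\<^sub>R Bt (zh t \<omega>) (\<xi> (2 * t + 1) \<omega>))
      \<in> borel_measurable (past (2 * Suc t))"
    by (intro borel_measurable_add borel_measurable_diff borel_measurable_scaleR
        borel_measurable_const)
  then show ?case
    by (subst measurable_cong) (simp_all add: full_step \<open>t < T\<close>)
qed

lemma nn_integral_full_step_le:
  assumes "t < T"
  shows "(\<integral>\<^sup>+\<omega>. ennreal ((norm (z (Suc t) \<omega> - zs))\<^sup>2) \<partial>M)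
           \<le> (\<integral>\<^sup>+\<omega>. ennreal ((1 - \<tau> t * \<mu>) * (norm (z t \<omega> - zs))\<^sup>2
                 + 2 * (\<tau> t)\<^sup>2 * (norm (Bt (z t \<omega>) (\<xi> (2 * t) \<omega>) - B (z t \<omega>)))\<^sup>2
                 + (\<tau> t)\<^sup>2 * \<sigma>\<^sup>2) \<partial>M)"
proof -
  define g where "g \<omega> = Bt (z t \<omega>) (\<xi> (2 * t) \<omega>)" for \<omega>
  define c where "c \<omega> = zh t \<omega> + \<tau> t *\<^sub>R g \<omega> - zs" for \<omega>
  have z: "z t \<in> borel_measurable (past (2 * t))"
    using assms by (simp add: measurable_iterate)
  have zh: "zh t \<in> borel_measurable (past (2 * t + 1))"
    using assms z by (rule measurable_half_step)
  have g: "g \<in> borel_measurable (past (2 * t + 1))"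
    using measurable_past_mono[OF z] measurable_past_sample unfolding g_def
    by (rule measurable_oracle) auto
  have c: "c \<in> borel_measurable (past (2 * t + 1))"
    using zh g unfolding c_def
    by (intro borel_measurable_add borel_measurable_diff borel_measurable_scaleR
        borel_measurable_const)
  have "(\<integral>\<^sup>+\<omega>. ennreal ((norm (z (Suc t) \<omega> - zs))\<^sup>2) \<partial>M)
      = (\<integral>\<^sup>+\<omega>. ennreal ((norm (c \<omega> - \<tau> t *\<^sub>R Bt (zh t \<omega>) (\<xi> (2 * t + 1) \<omega>)))\<^sup>2) \<partial>M)"
    using assms by (intro nn_integral_cong) (simp add: full_step c_def g_def algebra_simps)
  also have "\<dots> \<le> (\<integral>\<^sup>+\<omega>. ennreal ((norm (c \<omega> - \<tau> t *\<^sub>R B (zh t \<omega>)))\<^sup>2 + (\<tau> t)\<^sup>2 * \<sigma>\<^sup>2) \<partial>M)"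
    using zh c by (rule nn_integral_oracle_step_le) simp
  also have "\<dots> \<le> (\<integral>\<^sup>+\<omega>. ennreal ((1 - \<tau> t * \<mu>) * (norm (z t \<omega> - zs))\<^sup>2
                         + 2 * (\<tau> t)\<^sup>2 * (norm (g \<omega> - B (z t \<omega>)))\<^sup>2 + (\<tau> t)\<^sup>2 * \<sigma>\<^sup>2) \<partial>M)"
  proof (intro nn_integral_mono ennreal_leI add_right_mono)
    fix \<omega> assume "\<omega> \<in> space M"
    have c_eq: "c \<omega> - \<tau> t *\<^sub>R B (zh t \<omega>) = zh t \<omega> + \<tau> t *\<^sub>R g \<omega> - \<tau> t *\<^sub>R B (zh t \<omega>) - zs"
      by (simp add: c_def algebra_simps)
    show "(norm (c \<omega> - \<tau> t *\<^sub>R B (zh t \<omega>)))\<^sup>2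
        \<le> (1 - \<tau> t * \<mu>) * (norm (z t \<omega> - zs))\<^sup>2 + 2 * (\<tau> t)\<^sup>2 * (norm (g \<omega> - B (z t \<omega>)))\<^sup>2"
      unfolding c_eq g_def
      by (rule fbf_step_estimate[OF A_monotone B_lipschitz B_strongly_monotone mu_nonneg step_pos
          zs_zero step_small half_step[OF assms \<open>\<omega> \<in> space M\<close>]])
  qed
  finally show ?thesis
    by (simp add: g_def)
qed

lemma nn_integral_iterate_step:
  assumes "t < T"
  shows "(\<integral>\<^sup>+\<omega>. ennreal ((norm (z (Suc t) \<omega> - zs))\<^sup>2) \<partial>M)
           \<le> ennreal (1 - \<tau> t * \<mu>) * (\<integral>\<^sup>+\<omega>. ennreal ((norm (z t \<omega> - zs))\<^sup>2) \<partial>M)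
              + ennreal (3 * (\<tau> t)\<^sup>2 * \<sigma>\<^sup>2)"
proof -
  define g where "g \<omega> = Bt (z t \<omega>) (\<xi> (2 * t) \<omega>)" for \<omega>
  have z: "z t \<in> borel_measurable (past (2 * t))"
    using assms by (simp add: measurable_iterate)
  then have "z t \<in> borel_measurable M"
    by (rule measurable_from_subalg[OF subalgebra_past])
  moreover from this have "g \<in> borel_measurable M"
    unfolding g_def by (rule measurable_oracle) (rule measurable_sample)
  ultimately have measurable:
    "(\<lambda>\<omega>. (norm (z t \<omega> - zs))\<^sup>2) \<in> borel_measurable M"
    "(\<lambda>\<omega>. (norm (g \<omega> - B (z t \<omega>)))\<^sup>2) \<in> borel_measurable M"
    using B_measurable by measurable
  have "0 \<le> 1 - \<tau> t * \<mu>"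
    using step_small[of t] mult_nonneg_nonneg[OF zero_le_power2 zero_le_power2, of "\<tau> t" L]
    by linarith
  have "(\<integral>\<^sup>+\<omega>. ennreal ((norm (z (Suc t) \<omega> - zs))\<^sup>2) \<partial>M)
      \<le> (\<integral>\<^sup>+\<omega>. ennreal ((1 - \<tau> t * \<mu>) * (norm (z t \<omega> - zs))\<^sup>2
                 + 2 * (\<tau> t)\<^sup>2 * (norm (g \<omega> - B (z t \<omega>)))\<^sup>2 + (\<tau> t)\<^sup>2 * \<sigma>\<^sup>2) \<partial>M)"
    unfolding g_def using assms by (rule nn_integral_full_step_le)
  also have "\<dots> = ennreal (1 - \<tau> t * \<mu>) * (\<integral>\<^sup>+\<omega>. ennreal ((norm (z t \<omega> - zs))\<^sup>2) \<partial>M)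
      + ennreal (2 * (\<tau> t)\<^sup>2) * (\<integral>\<^sup>+\<omega>. ennreal ((norm (g \<omega> - B (z t \<omega>)))\<^sup>2) \<partial>M)
      + ennreal ((\<tau> t)\<^sup>2 * \<sigma>\<^sup>2)"
    using measurable \<open>0 \<le> 1 - \<tau> t * \<mu>\<close> by (intro nn_integral_affine_combination) auto
  also have "\<dots> \<le> ennreal (1 - \<tau> t * \<mu>) * (\<integral>\<^sup>+\<omega>. ennreal ((norm (z t \<omega> - zs))\<^sup>2) \<partial>M)
      + ennreal (2 * (\<tau> t)\<^sup>2) * ennreal (\<sigma>\<^sup>2) + ennreal ((\<tau> t)\<^sup>2 * \<sigma>\<^sup>2)"
    using nn_integral_oracle_error_le[OF B_measurable z order.refl]
    by (intro add_mono mult_left_mono order.refl) (simp_all add: g_def)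
  also have "\<dots> = ennreal (1 - \<tau> t * \<mu>) * (\<integral>\<^sup>+\<omega>. ennreal ((norm (z t \<omega> - zs))\<^sup>2) \<partial>M)
      + ennreal (3 * (\<tau> t)\<^sup>2 * \<sigma>\<^sup>2)"
    by (simp add: add.assoc flip: ennreal_mult ennreal_plus)
  finally show ?thesis .
qed

lemma nn_integral_iterate_rate:
  assumes "0 < \<mu>" "1 \<le> a" and tau: "\<And>t. \<tau> t = 2 / ((real t + a + 1) * \<mu>)"
    and C: "a * (norm (z0 - zs))\<^sup>2 + 12 * \<sigma>\<^sup>2 / \<mu>\<^sup>2 \<le> C"
  shows "(\<integral>\<^sup>+\<omega>. ennreal ((norm (z T \<omega> - zs))\<^sup>2) \<partial>M) \<le> ennreal (C / (real T + a))"
proof (rule ennreal_recursion_rate[where K = "\<sigma>\<^sup>2 / \<mu>\<^sup>2"])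
  have "0 \<le> a * (norm (z0 - zs))\<^sup>2" "0 \<le> \<sigma>\<^sup>2 / \<mu>\<^sup>2"
    using \<open>1 \<le> a\<close> by simp_all
  with C have C_init: "a * (norm (z0 - zs))\<^sup>2 \<le> C" and C_noise: "12 * (\<sigma>\<^sup>2 / \<mu>\<^sup>2) \<le> C"
    unfolding times_divide_eq_right[symmetric] by linarith+
  from C_noise show "12 * (\<sigma>\<^sup>2 / \<mu>\<^sup>2) \<le> C" .
  have "(\<integral>\<^sup>+\<omega>. ennreal ((norm (z 0 \<omega> - zs))\<^sup>2) \<partial>M) = ennreal ((norm (z0 - zs))\<^sup>2)"
    using init by (simp add: nn_integral_cong emeasure_space_1)
  also have "\<dots> \<le> ennreal (C / a)"
    using C_init \<open>1 \<le> a\<close> by (intro ennreal_leI) (simp add: le_divide_eq mult.commute)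
  finally show "(\<integral>\<^sup>+\<omega>. ennreal ((norm (z 0 \<omega> - zs))\<^sup>2) \<partial>M) \<le> ennreal (C / a)" .
  show "(\<integral>\<^sup>+\<omega>. ennreal ((norm (z (Suc t) \<omega> - zs))\<^sup>2) \<partial>M)
      \<le> ennreal (1 - 2 / (real t + a + 1)) * (\<integral>\<^sup>+\<omega>. ennreal ((norm (z t \<omega> - zs))\<^sup>2) \<partial>M)
         + ennreal (12 * (\<sigma>\<^sup>2 / \<mu>\<^sup>2) / (real t + a + 1)\<^sup>2)" if "t < T" for t
  proof -
    have "\<tau> t * \<mu> = 2 / (real t + a + 1)"
      using \<open>0 < \<mu>\<close> by (simp add: tau)
    moreover have "3 * (\<tau> t)\<^sup>2 * \<sigma>\<^sup>2 = 12 * (\<sigma>\<^sup>2 / \<mu>\<^sup>2) / (real t + a + 1)\<^sup>2"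
      by (simp add: tau power_divide power_mult_distrib)
    ultimately show ?thesis
      using nn_integral_iterate_step[OF that] by simp
  qed
qed (use \<open>1 \<le> a\<close> in simp_all)

end

theorem theoremC1:
  fixes A :: "real ^ 'd \<Rightarrow> (real ^ 'd) set"
    and B :: "real ^ 'd \<Rightarrow> real ^ 'd"
    and L \<mu> \<sigma> :: real
    and zs z0 :: "real ^ 'd"
    and M :: "'w measure"
    and S :: "'s measure"
    and \<xi> :: "nat \<Rightarrow> 'w \<Rightarrow> 's"
    and Bt :: "real ^ 'd \<Rightarrow> 's \<Rightarrow> real ^ 'd"
    and z zh :: "nat \<Rightarrow> 'w \<Rightarrow> real ^ 'd"
    and T :: nat
  defines "\<tau> \<equiv> (\<lambda>t::nat. 2 / ((real t + 1) * \<mu> + 6 * L))"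
  assumes maxmon: "maximal_monotone A"
    and lip: "L-lipschitz_on UNIV B"
    and strmon: "strongly_monotone \<mu> B"
    and mu_pos: "\<mu> > 0"
    and zero: "0 \<in> {u + B zs | u. u \<in> A zs}"
    and prob: "prob_space M"
    and indep: "prob_space.indep_vars M (\<lambda>_. S) \<xi> UNIV"
    and Bt_meas: "(\<lambda>(x, s). Bt x s) \<in> borel_measurable (borel \<Otimes>\<^sub>M S)"
    and unbiased: "\<And>i x. integrable M (\<lambda>\<omega>. Bt x (\<xi> i \<omega>)) \<and>
                            (\<integral>\<omega>. Bt x (\<xi> i \<omega>) \<partial>M) = B x"
    and variance: "\<And>i x. (\<integral>\<^sup>+\<omega>. ennreal ((norm (Bt x (\<xi> i \<omega>) - B x))\<^sup>2) \<partial>M)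
                            \<le> ennreal (\<sigma>\<^sup>2)"
    and init: "\<And>\<omega>. \<omega> \<in> space M \<Longrightarrow> z 0 \<omega> = z0"
    and half_step: "\<And>t \<omega>. t < T \<Longrightarrow> \<omega> \<in> space M \<Longrightarrow>
           zh t \<omega> \<in> resolvent (scale_op (\<tau> t) A)
                       (z t \<omega> - \<tau> t *\<^sub>R Bt (z t \<omega>) (\<xi> (2 * t) \<omega>))"
    and full_step: "\<And>t \<omega>. t < T \<Longrightarrow> \<omega> \<in> space M \<Longrightarrow>
           z (Suc t) \<omega> = zh t \<omega> + \<tau> t *\<^sub>R Bt (z t \<omega>) (\<xi> (2 * t) \<omega>)
                                  - \<tau> t *\<^sub>R Bt (zh t \<omega>) (\<xi> (2 * t + 1) \<omega>)"
    and z_meas: "\<And>t. t \<le> T \<Longrightarrow> z t \<in> borel_measurable M"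
    and zh_meas: "\<And>t. t < T \<Longrightarrow> zh t \<in> borel_measurable M"
  shows "(\<integral>\<^sup>+\<omega>. ennreal ((norm (z T \<omega> - zs))\<^sup>2) \<partial>M)
           \<le> ennreal (((6 * L / \<mu>) * (norm (z0 - zs))\<^sup>2 + 48 * \<sigma>\<^sup>2 / \<mu>\<^sup>2)
                      / (real T + 6 * L / \<mu>))"
proof -
  interpret prob_space M
    by (rule prob)
  have "\<mu> \<le> L"
    using strmon lip by (rule strongly_monotone_le_lipschitz)
  define a where "a = 6 * L / \<mu>"
  have "6 \<le> a"
    using \<open>\<mu> \<le> L\<close> mu_pos by (simp add: a_def field_simps)
  have tau_eq: "\<tau> t = 2 / ((real t + a + 1) * \<mu>)" for t
  proof -
    have "(real t + 1) * \<mu> + 6 * L = (real t + a + 1) * \<mu>"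
      using mu_pos by (simp add: a_def algebra_simps)
    then show ?thesis
      by (simp add: \<tau>_def)
  qed
  interpret stochastic_fbf M S \<xi> Bt B \<sigma> A L \<mu> zs z0 \<tau> z zh T
  proof unfold_locales
    show "0 < \<tau> t" "2 * \<tau> t * \<mu> + 2 * (\<tau> t)\<^sup>2 * L\<^sup>2 \<le> 1" for t
      using mu_pos \<open>\<mu> \<le> L\<close> fbf_step_size_small[of \<mu> L "(real t + 1) * \<mu>"]
      by (simp_all add: \<tau>_def add_pos_nonneg)
    obtain u where "u \<in> A zs" "0 = u + B zs"
      using zero by blast
    then show "- B zs \<in> A zs"
      by (metis add_eq_0_iff2)
  qed (use indep Bt_meas unbiased variance maxmon lip strmon mu_pos init half_step full_step
       in \<open>simp_all add: emeasure_space_1 maximal_monotone_def\<close>)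
  show ?thesis
    unfolding a_def[symmetric] using \<open>6 \<le> a\<close>
    by (intro nn_integral_iterate_rate[OF mu_pos _ tau_eq]) (simp_all add: divide_right_mono)
qed

end
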